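(* There exists a compact metric space $X$ which admits a minimal map (indeed a minimal homeomorphism), admits no minimal noninvertible continuous map, is not homeomorphic to the circle $\mathbb{S}^1$, and is not a Slovak space.
   Context: A continuous map $T:X\to X$ on a compact metric space $X$ is minimal if for every $x\in X$ the forward orbit $\{T^n(x):n\in\mathbb{N}\}$ is dense in $X$. $H(X)$ denotes the group of all homeomorphisms of $X$. A nondegenerate compact metric space $X$ is a Slovak space if $H(X)=\{T^n:n\in\mathbb{Z}\}$ for some minimal homeomorphism $T$. *)

theory Defs
  imports "HOL-Analysis.Analysis"
begin

text \<open>Compact metric spaces are represented as compact subsets of the type
  nat \<Rightarrow> real (countable product of the reals, a metric space via Function_Metric);
  every compact metric space embeds homeomorphically into it (Hilbert cube).\<close>

definition minimal_map :: "'a::topological_space set \<Rightarrow> ('a \<Rightarrow> 'a) \<Rightarrow> bool" where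
  "minimal_map X T \<longleftrightarrow> T ` X \<subseteq> X \<and> continuous_on X T \<and>
     (\<forall>x\<in>X. X \<subseteq> closure {(T ^^ n) x | n::nat. True})"

definition int_iter :: "('a \<Rightarrow> 'a) \<Rightarrow> ('a \<Rightarrow> 'a) \<Rightarrow> int \<Rightarrow> 'a \<Rightarrow> 'a" where
  "int_iter T S n = (if n \<ge> 0 then T ^^ nat n else S ^^ nat (- n))"

definition slovak_space :: "'a::topological_space set \<Rightarrow> bool" where
  "slovak_space X \<longleftrightarrow> (\<exists>a\<in>X. \<exists>b\<in>X. a \<noteq> b) \<and>
     (\<exists>T S. homeomorphism X X T S \<and> minimal_map X T \<and>
        (\<forall>h. (\<exists>g. homeomorphism X X h g) \<longleftrightarrow>
             (\<exists>n::int. \<forall>x\<in>X. h x = int_iter T S n x)))"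

end

theory Submission
  imports Defs
begin

text \<open>The example is the disjoint union of two circles. Swapping the circles while rotating by
  an irrational angle is a minimal homeomorphism. Conversely, a minimal map f of a compact space
  is onto, and every nonempty open set contains the whole fibre of some point, so f cannot map an
  open set into the image of a disjoint set. Lifting f locally to the angle coordinate, a
  non-injective lift would fold an arc over the rest of its domain, and two points with a common
  image would make an arc around one of them map into the image of an arc around the other; so
  every minimal map of the two circles is injective. The swap of the circles is an involution,
  which in a Slovak space would be a power of the minimal homeomorphism. Disconnectedness rules
  out the circle.\<close>

section \<open>Minimal maps\<close>

lemma funpow_in_invariant: "f ` X \<subseteq> X \<Longrightarrow> x \<in> X \<Longrightarrow> (f ^^ n) x \<in> X"
  by (induction n) auto

lemma continuous_on_funpow:
  assumes "f ` X \<subseteq> X" "continuous_on X f"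
  shows "continuous_on X (f ^^ n)"
proof (induction n)
  case (Suc n)
  have "continuous_on X (f \<circ> (f ^^ n))"
    using Suc assms by (intro continuous_on_compose continuous_on_subset[OF assms(2)])
      (auto intro: funpow_in_invariant)
  then show ?case by simp
qed simp

lemma minimal_map_orbit_closure_subset:
  assumes "minimal_map X f" "x \<in> X" "closed C" "\<And>n. (f ^^ n) x \<in> C"
  shows "X \<subseteq> C"
proof -
  have "closure {(f ^^ n) x | n. True} \<subseteq> C"
    using assms(3,4) by (intro closure_minimal) auto
  then show ?thesis using assms(1,2) unfolding minimal_map_def by blast
qed

lemma minimal_map_imp_surj:
  fixes X :: "'a::metric_space set"
  assumes min: "minimal_map X f" and "compact X"
  shows "f ` X = X"
proof
  have fX: "f ` X \<subseteq> X" and cf: "continuous_on X f"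
    using min unfolding minimal_map_def by auto
  then show "f ` X \<subseteq> X" by blast
  show "X \<subseteq> f ` X"
  proof (cases "X = {}")
    case False
    then obtain y where y: "y \<in> X" by blast
    have "(f ^^ n) (f y) \<in> f ` X" for n
      by (metis funpow_swap1 funpow_in_invariant[OF fX y] image_eqI)
    moreover have "closed (f ` X)"
      using \<open>compact X\<close> cf by (intro compact_imp_closed compact_continuous_image)
    ultimately show ?thesis
      using fX y by (intro minimal_map_orbit_closure_subset[OF min, of "f y"]) auto
  qed simp
qed

text \<open>If the preimage of every point met the closed set X - U, a backward orbit inside X - U
  would accumulate at a point whose whole forward orbit lies in X - U.\<close>
lemma minimal_map_image_diff_open:
  fixes X :: "'a::metric_space set"
  assumes min: "minimal_map X f" and "compact X" "open U" "U \<inter> X \<noteq> {}"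
  shows "\<not> X \<subseteq> f ` (X - U)"
proof
  assume "X \<subseteq> f ` (X - U)"
  then have "\<forall>y\<in>X. \<exists>x. x \<in> X - U \<and> f x = y" by blast
  then obtain g where g: "\<And>y. y \<in> X \<Longrightarrow> g y \<in> X - U \<and> f (g y) = y" by metis
  from assms(4) obtain y0 where y0: "y0 \<in> X" by blast
  define z where "z n = (g ^^ n) y0" for n
  have zX: "z n \<in> X" for n unfolding z_def using y0 g by (induction n) auto
  have zU: "z (Suc n) \<notin> U" and fz: "f (z (Suc n)) = z n" for n
    using g zX unfolding z_def by auto
  have fz_iter: "(f ^^ j) (z (n + j)) = z n" for j n
  proof (induction j)
    case (Suc j)
    have "(f ^^ Suc j) (z (n + Suc j)) = (f ^^ j) (f (z (Suc (n + j))))"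
      by (simp only: funpow_Suc_right comp_apply add_Suc_right)
    then show ?case using Suc by (simp only: fz)
  qed simp
  have fX: "f ` X \<subseteq> X" and cf: "continuous_on X f"
    using min unfolding minimal_map_def by auto
  obtain w r where w: "w \<in> X" and r: "strict_mono r" and lim: "(z \<circ> r) \<longlonglongrightarrow> w"
    using compact_imp_seq_compact[OF \<open>compact X\<close>] zX unfolding seq_compact_def by metis
  have closed: "closed (X - U)"
    using assms(2,3) by (simp add: closed_Diff compact_imp_closed)
  have "(f ^^ j) w \<in> X - U" for j
  proof (rule Lim_in_closed_set[OF closed])
    show "(\<lambda>k. (f ^^ j) (z (r k))) \<longlonglongrightarrow> (f ^^ j) w"
      using continuous_on_tendsto_compose[OF continuous_on_funpow[OF fX cf] lim[unfolded comp_def] w] zX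
      by auto
    have "\<forall>\<^sub>F k in sequentially. Suc j \<le> r k"
      using filterlim_subseq[OF r] by (simp add: filterlim_at_top)
    then show "\<forall>\<^sub>F k in sequentially. (f ^^ j) (z (r k)) \<in> X - U"
    proof (rule eventually_mono)
      fix k assume "Suc j \<le> r k"
      then obtain m where "r k = Suc m + j" by (metis add.commute le_Suc_ex add_Suc_right)
      then show "(f ^^ j) (z (r k)) \<in> X - U" using fz_iter[of j "Suc m"] zX zU by simp
    qed
  qed simp
  then have "X \<subseteq> X - U" by (rule minimal_map_orbit_closure_subset[OF min w closed])
  then show False using assms(4) by blast
qed

lemma minimal_map_no_fold:
  fixes X :: "'a::metric_space set"
  assumes min: "minimal_map X f" and "compact X" "open V" "V \<inter> X \<noteq> {}"
    and "W \<subseteq> X" "V \<inter> W = {}" "f ` (V \<inter> X) \<subseteq> f ` W"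
  shows False
proof -
  have "X = f ` (V \<inter> X) \<union> f ` (X - V)"
    using minimal_map_imp_surj[OF min \<open>compact X\<close>] by blast
  also have "\<dots> \<subseteq> f ` (X - V)" using assms(5-7) by blast
  finally show False using minimal_map_image_diff_open[OF min assms(2-4)] by blast
qed

lemma minimal_map_periodic_imp_finite:
  fixes X :: "'a::t1_space set"
  assumes min: "minimal_map X f" and "x \<in> X" "0 < k" "(f ^^ k) x = x"
  shows "finite X"
proof -
  have orbit: "{(f ^^ n) x | n. True} \<subseteq> (\<lambda>j. (f ^^ j) x) ` {..<k}"
  proof clarify
    fix n
    show "(f ^^ n) x \<in> (\<lambda>j. (f ^^ j) x) ` {..<k}"
      using funpow_mod_eq[OF assms(4), of n] assms(3) by (metis image_eqI lessThan_iff mod_less_divisor)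
  qed
  then have "finite {(f ^^ n) x | n. True}" by (rule finite_subset) simp
  moreover have "X \<subseteq> {(f ^^ n) x | n. True}"
    using calculation assms(2) by (intro minimal_map_orbit_closure_subset[OF min]) (auto intro: finite_imp_closed)
  ultimately show ?thesis by (rule finite_subset[rotated])
qed

lemma minimal_map_conj:
  fixes X :: "'a::t2_space set" and Y :: "'b::topological_space set"
  assumes hom: "homeomorphism X Y \<phi> \<psi>" and "compact X" and min: "minimal_map X T"
  shows "minimal_map Y (\<phi> \<circ> T \<circ> \<psi>)"
proof -
  have TX: "T ` X \<subseteq> X" and cT: "continuous_on X T"
    using min unfolding minimal_map_def by auto
  from hom have \<phi>X: "\<phi> ` X = Y" and \<psi>Y: "\<psi> ` Y = X" and c\<phi>: "continuous_on X \<phi>"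
    and c\<psi>: "continuous_on Y \<psi>" and \<psi>\<phi>: "\<And>x. x \<in> X \<Longrightarrow> \<psi> (\<phi> x) = x"
    unfolding homeomorphism_def by auto
  have iter: "((\<phi> \<circ> T \<circ> \<psi>) ^^ n) (\<phi> x) = \<phi> ((T ^^ n) x)" if "x \<in> X" for n x
    by (induction n) (simp_all add: \<psi>\<phi> funpow_in_invariant[OF TX that])
  have dense: "Y \<subseteq> closure {((\<phi> \<circ> T \<circ> \<psi>) ^^ n) y | n. True}" if y: "y \<in> Y" for y
  proof -
    obtain x where x: "x \<in> X" "y = \<phi> x" using y \<phi>X by auto
    have "X \<subseteq> X \<inter> \<phi> -` closure {((\<phi> \<circ> T \<circ> \<psi>) ^^ n) y | n. True}"
    proof (rule minimal_map_orbit_closure_subset[OF min x(1)])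
      show "closed (X \<inter> \<phi> -` closure {((\<phi> \<circ> T \<circ> \<psi>) ^^ n) y | n. True})"
        using c\<phi> \<open>compact X\<close> by (intro continuous_closed_preimage compact_imp_closed) auto
      show "(T ^^ n) x \<in> X \<inter> \<phi> -` closure {((\<phi> \<circ> T \<circ> \<psi>) ^^ n) y | n. True}" for n
        using funpow_in_invariant[OF TX x(1)] iter[OF x(1), of n] x(2)
        by (auto intro!: closure_subset[THEN subsetD] exI[of _ n])
    qed
    then show ?thesis using \<phi>X by auto
  qed
  have "continuous_on Y (\<phi> \<circ> (T \<circ> \<psi>))"
  proof (rule continuous_on_compose)
    show "continuous_on Y (T \<circ> \<psi>)" using continuous_on_compose[OF c\<psi>] cT \<psi>Y by simp
    have "(T \<circ> \<psi>) ` Y \<subseteq> X" using TX \<psi>Y by auto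
    then show "continuous_on ((T \<circ> \<psi>) ` Y) \<phi>" by (rule continuous_on_subset[OF c\<phi>])
  qed
  then show ?thesis
    using dense \<phi>X \<psi>Y TX \<psi>\<phi> unfolding minimal_map_def by (auto simp: comp_assoc)
qed

lemma bij_betw_of_conj:
  assumes hom: "homeomorphism X Y \<phi> \<psi>" and TX: "T ` X \<subseteq> X"
    and bij: "bij_betw (\<phi> \<circ> T \<circ> \<psi>) Y Y"
  shows "bij_betw T X X"
proof -
  have "bij_betw \<phi> X Y" "bij_betw \<psi> Y X"
    using hom unfolding homeomorphism_def by (auto intro: bij_betw_byWitness)
  then have "bij_betw (\<psi> \<circ> (\<phi> \<circ> T \<circ> \<psi>) \<circ> \<phi>) X X"
    using bij by (blast intro: bij_betw_trans)
  moreover have "(\<psi> \<circ> (\<phi> \<circ> T \<circ> \<psi>) \<circ> \<phi>) x = T x" if "x \<in> X" for x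
    using hom TX that unfolding homeomorphism_def by auto
  ultimately show ?thesis using bij_betw_cong by blast
qed

lemma homeomorphism_funpow_inverse:
  assumes "homeomorphism X X T S" "y \<in> X"
  shows "(T ^^ m) ((S ^^ m) y) = y"
proof (induction m)
  case (Suc m)
  have SX: "S ` X \<subseteq> X" and TS: "\<And>y. y \<in> X \<Longrightarrow> T (S y) = y"
    using assms(1) unfolding homeomorphism_def by auto
  have "(T ^^ Suc m) ((S ^^ Suc m) y) = (T ^^ m) (T (S ((S ^^ m) y)))"
    by (simp add: funpow_swap1)
  then show ?case using Suc TS funpow_in_invariant[OF SX assms(2)] by simp
qed simp

text \<open>A nontrivial involution that is an integer power T^n has a periodic point: apply T^|n| twice.\<close>
lemma int_iter_involution_periodic:
  assumes homT: "homeomorphism X X T S" and h: "\<forall>y\<in>X. h y = int_iter T S n y"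
    and x: "x \<in> X" "h x \<in> X" "h (h x) = x" "h x \<noteq> x"
  obtains m where "0 < m" "(T ^^ m) x = x"
proof (cases "n \<ge> 0")
  case True
  define k where "k = nat n"
  have h_eq: "h y = (T ^^ k) y" if "y \<in> X" for y
    using h that True by (simp add: int_iter_def k_def)
  have "(T ^^ (k + k)) x = (T ^^ k) ((T ^^ k) x)" by (simp add: funpow_add)
  also have "\<dots> = (T ^^ k) (h x)" using h_eq[OF x(1)] by simp
  also have "\<dots> = h (h x)" using h_eq[OF x(2)] by simp
  finally have "(T ^^ (k + k)) x = x" using x(3) by simp
  moreover have "k \<noteq> 0"
  proof
    assume "k = 0"
    then show False using h_eq[OF x(1)] x(4) by simp
  qed
  ultimately show thesis using that[of "k + k"] by simp
next
  case False
  define k where "k = nat (- n)"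
  have h_eq: "h y = (S ^^ k) y" if "y \<in> X" for y
    using h that False by (simp add: int_iter_def k_def)
  have "(T ^^ (k + k)) x = (T ^^ k) ((T ^^ k) (h (h x)))" using x(3) by (simp add: funpow_add)
  also have "\<dots> = (T ^^ k) ((T ^^ k) ((S ^^ k) (h x)))" using h_eq[OF x(2)] by simp
  also have "\<dots> = (T ^^ k) (h x)" using homeomorphism_funpow_inverse[OF homT x(2)] by simp
  also have "\<dots> = x" using homeomorphism_funpow_inverse[OF homT x(1)] h_eq[OF x(1)] by simp
  finally show thesis using that[of "k + k"] False by (simp add: k_def)
qed

lemma not_slovak_space_if_involution:
  fixes X :: "'a::t1_space set"
  assumes "infinite X" and hom: "homeomorphism X X h h" and x: "x \<in> X" "h x \<noteq> x"
  shows "\<not> slovak_space X"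
proof
  assume "slovak_space X"
  then obtain T S where homT: "homeomorphism X X T S" and min: "minimal_map X T"
    and powers: "\<And>h. (\<exists>g. homeomorphism X X h g) \<longleftrightarrow> (\<exists>n. \<forall>y\<in>X. h y = int_iter T S n y)"
    unfolding slovak_space_def by blast
  obtain n where "\<forall>y\<in>X. h y = int_iter T S n y" using powers hom by blast
  moreover have "h x \<in> X" "h (h x) = x" using hom x unfolding homeomorphism_def by auto
  ultimately obtain m where "0 < m" "(T ^^ m) x = x"
    using int_iter_involution_periodic[OF homT] x by blast
  then show False using minimal_map_periodic_imp_finite[OF min x(1)] \<open>infinite X\<close> by blast
qed

section \<open>Two circles in the plane\<close>

definition circle_point :: "complex \<Rightarrow> real \<Rightarrow> complex" where
  "circle_point c t = c + exp (\<i> * of_real t)"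

definition two_circles :: "complex set" where
  "two_circles = sphere 0 1 \<union> sphere 3 1"

lemma mem_two_circles: "z \<in> two_circles \<longleftrightarrow> (\<exists>c\<in>{0,3}. cmod (z - c) = 1)"
  by (auto simp: two_circles_def dist_norm norm_minus_commute)

lemma compact_two_circles: "compact two_circles"
  unfolding two_circles_def by (intro compact_Un compact_sphere)

lemma norm_circle_point_minus [simp]: "cmod (circle_point c t - c) = 1"
  by (simp add: circle_point_def)

lemma circle_point_in_two_circles: "c \<in> {0,3} \<Longrightarrow> circle_point c t \<in> two_circles"
  unfolding mem_two_circles by (intro bexI[of _ c]) auto

lemma continuous_on_circle_point: "continuous_on S (circle_point c)"
  unfolding circle_point_def by (intro continuous_intros)

lemma dist_circle_point: "dist (circle_point c t) (circle_point c s) \<le> \<bar>t - s\<bar>"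
proof -
  have "exp (\<i> * of_real t) - exp (\<i> * of_real s) = exp (\<i> * of_real s) * (exp (\<i> * of_real (t - s)) - 1)"
    by (simp add: algebra_simps flip: exp_add)
  then have "dist (circle_point c t) (circle_point c s) = cmod (exp (\<i> * of_real (t - s)) - 1)"
    by (simp add: circle_point_def dist_norm norm_mult)
  also have "\<dots> = 2 * \<bar>sin ((t - s) / 2)\<bar>" by (rule dist_exp_i_1)
  also have "\<dots> \<le> \<bar>t - s\<bar>" using abs_sin_x_le_abs_x[of "(t - s) / 2"] by simp
  finally show ?thesis .
qed

lemma circle_point_eq_iff: "circle_point c t = circle_point c s \<longleftrightarrow> (\<exists>n::int. t = s + 2 * of_int n * pi)"
proof -
  have "circle_point c t = circle_point c s \<longleftrightarrow>
      (\<exists>n::int. \<i> * of_real t = \<i> * of_real s + of_int (2 * n) * pi * \<i>)"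
    by (simp add: circle_point_def exp_eq)
  also have "\<dots> \<longleftrightarrow> (\<exists>n::int. t = s + 2 * of_int n * pi)"
    by (simp add: complex_eq_iff)
  finally show ?thesis .
qed

lemma circle_point_inj:
  assumes "circle_point c t = circle_point c s" "\<bar>t - s\<bar> < 2 * pi"
  shows "t = s"
proof -
  obtain n :: int where n: "t = s + 2 * of_int n * pi" using assms(1) circle_point_eq_iff by blast
  then have "\<bar>n\<bar> * (2 * pi) < 1 * (2 * pi)" using assms(2) by (simp add: abs_mult)
  then have "n = 0" by (subst (asm) mult_less_cancel_right) auto
  then show ?thesis using n by simp
qed

lemma circle_point_shift: "circle_point c (t + 2 * of_int n * pi) = circle_point c t"
  unfolding circle_point_eq_iff by (intro exI[of _ n]) simp

lemma circle_point_surj: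
  assumes "cmod (z - c) = 1"
  obtains t where "z = circle_point c t"
proof -
  have "z - c = of_real (cmod (z - c)) * exp (\<i> * of_real (Arg (z - c)))"
    using assms by (intro Arg_eq) auto
  then show ?thesis using assms by (intro that[of "Arg (z - c)"]) (simp add: circle_point_def algebra_simps)
qed

lemma two_circles_centre_unique:
  assumes "c \<in> {0,3}" "c' \<in> {0,3}" "cmod (z - c) = 1" "cmod (w - c') = 1" "dist z w < 1"
  shows "c = c'"
proof (rule ccontr)
  assume "c \<noteq> c'"
  then have "3 = dist c c'" using assms(1,2) by auto
  also have "\<dots> \<le> dist c z + dist z w + dist w c'"
    using dist_triangle[of c c' z] dist_triangle[of z c' w] by linarith
  also have "\<dots> < 3" using assms(3-5) by (simp add: dist_norm norm_minus_commute)
  finally show False by simp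
qed

lemma two_circles_cases:
  assumes "z \<in> two_circles"
  obtains c u where "c \<in> {0,3}" "cmod u = 1" "z = c + u"
  using assms unfolding mem_two_circles by (metis add.commute diff_add_cancel)

lemma sphere_3_not_unit: "cmod (z - 3) = 1 \<Longrightarrow> cmod z \<noteq> 1"
  using two_circles_centre_unique[of 3 0 z z] by auto

lemma connected_subset_two_circles:
  assumes "connected S" "S \<subseteq> two_circles" "z \<in> S" "w \<in> S" "c \<in> {0,3}" "cmod (z - c) = 1"
  shows "cmod (w - c) = 1"
proof (rule ccontr)
  assume w: "cmod (w - c) \<noteq> 1"
  have cover: "S \<subseteq> sphere c 1 \<union> sphere (3 - c) 1"
    using assms(2,5) by (auto simp: two_circles_def)
  have "sphere c 1 \<inter> sphere (3 - c) 1 = {}"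
    using two_circles_centre_unique[of c "3 - c"] assms(5)
    by (fastforce simp: dist_norm norm_minus_commute)
  moreover have "z \<in> sphere c 1" "w \<in> sphere (3 - c) 1"
    using assms(3-6) w cover by (auto simp: dist_norm norm_minus_commute)
  ultimately show False
    using connected_closed[of S] assms(1,3,4) cover closed_sphere
    by (metis (no_types, lifting) disjoint_iff_not_equal Int_iff emptyE)
qed

lemma circle_point_local_param:
  assumes c: "c \<in> {0,3}" and "\<epsilon> > 0"
  obtains r where "r > 0"
    "\<And>z. z \<in> two_circles \<Longrightarrow> dist z (circle_point c t0) < r \<Longrightarrow>
      \<exists>t. z = circle_point c t \<and> \<bar>t - t0\<bar> < \<epsilon>"
proof -
  have "continuous (at 1) Arg"
    by (rule continuous_at_Arg) (auto simp: complex_nonpos_Reals_iff)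
  then obtain r0 where r0: "r0 > 0" "\<And>w. dist w 1 < r0 \<Longrightarrow> dist (Arg w) (Arg 1) < \<epsilon>"
    using \<open>\<epsilon> > 0\<close> unfolding continuous_at_eps_delta by blast
  have "\<exists>t. z = circle_point c t \<and> \<bar>t - t0\<bar> < \<epsilon>"
    if z: "z \<in> two_circles" "dist z (circle_point c t0) < min r0 1" for z
  proof -
    obtain c' where c': "c' \<in> {0,3}" "cmod (z - c') = 1" using z(1) mem_two_circles by blast
    have "dist z (circle_point c t0) < 1" using z(2) by simp
    then have "c' = c" using two_circles_centre_unique[OF c'(1) c c'(2) norm_circle_point_minus] by blast
    define w where "w = (z - c) * exp (- (\<i> * of_real t0))"
    have "w - 1 = (z - circle_point c t0) * exp (- (\<i> * of_real t0))"
      unfolding w_def circle_point_def by (simp add: algebra_simps flip: exp_add)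
    then have "dist w 1 < r0" using z(2) by (simp add: dist_norm norm_mult)
    define \<theta> where "\<theta> = Arg w"
    have arg: "\<bar>\<theta>\<bar> < \<epsilon>" using r0(2) \<open>dist w 1 < r0\<close> by (simp add: \<theta>_def dist_real_def)
    have "cmod w = 1" using c' \<open>c' = c\<close> by (simp add: w_def norm_mult)
    have "w = of_real (cmod w) * exp (\<i> * of_real \<theta>)"
      unfolding \<theta>_def by (rule Arg_eq) (use \<open>cmod w = 1\<close> in auto)
    with \<open>cmod w = 1\<close> have w: "w = exp (\<i> * of_real \<theta>)" by simp
    have "z - c = w * exp (\<i> * of_real t0)" unfolding w_def by (simp flip: exp_add)
    also have "\<dots> = exp (\<i> * of_real (t0 + \<theta>))" unfolding w by (simp add: algebra_simps flip: exp_add)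
    finally have "z = circle_point c (t0 + \<theta>)" unfolding circle_point_def by (simp add: algebra_simps)
    then show ?thesis using arg by (intro exI[of _ "t0 + \<theta>"]) simp
  qed
  then show ?thesis using that[of "min r0 1"] r0(1) by simp
qed

lemma two_circles_lift:
  assumes cf: "continuous_on two_circles f" and f_in: "f ` two_circles \<subseteq> two_circles"
    and c: "c \<in> {0,3}" and "a \<le> b"
  obtains c' F where "c' \<in> {0,3}" "continuous_on {a..b} F"
    "\<And>t. t \<in> {a..b} \<Longrightarrow> f (circle_point c t) = circle_point c' (F t)"
proof -
  define \<phi> where "\<phi> t = f (circle_point c t)" for t
  have "circle_point c ` {a..b} \<subseteq> two_circles" using circle_point_in_two_circles[OF c] by auto
  then have c\<phi>: "continuous_on {a..b} \<phi>"
    using continuous_on_compose[OF continuous_on_circle_point continuous_on_subset[OF cf]]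
    unfolding \<phi>_def comp_def by blast
  have \<phi>_in: "\<phi> ` {a..b} \<subseteq> two_circles"
    using f_in circle_point_in_two_circles[OF c] unfolding \<phi>_def by auto
  have "\<phi> a \<in> two_circles" using \<phi>_in \<open>a \<le> b\<close> by auto
  then obtain c' where c': "c' \<in> {0,3}" "cmod (\<phi> a - c') = 1" unfolding mem_two_circles by blast
  have on_c': "cmod (\<phi> t - c') = 1" if "t \<in> {a..b}" for t
    using connected_subset_two_circles[OF connected_continuous_image[OF c\<phi>] \<phi>_in _ _ c'] \<open>a \<le> b\<close> that
    by auto
  have "continuous_on {a..b} (\<lambda>t. \<phi> t - c')" using c\<phi> by (intro continuous_intros)
  moreover have "contractible {a..b}" by (intro convex_imp_contractible) simp
  moreover have "\<And>t. t \<in> {a..b} \<Longrightarrow> \<phi> t - c' \<noteq> 0" using on_c' by fastforce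
  ultimately obtain h where ch: "continuous_on {a..b} h" and h: "\<And>t. t \<in> {a..b} \<Longrightarrow> \<phi> t - c' = exp (h t)"
    using continuous_logarithm_on_contractible[of "{a..b}" "\<lambda>t. \<phi> t - c'"] by blast
  have "f (circle_point c t) = circle_point c' (Im (h t))" if "t \<in> {a..b}" for t
  proof -
    have "Re (h t) = 0" using on_c'[OF that] h[OF that] by (intro norm_exp_imaginary) simp
    then have "h t = \<i> * of_real (Im (h t))" by (simp add: complex_eq_iff)
    then show ?thesis using h[OF that] unfolding \<phi>_def circle_point_def by (simp add: algebra_simps)
  qed
  moreover have "continuous_on {a..b} (\<lambda>t. Im (h t))" using ch by (intro continuous_intros)
  ultimately show ?thesis using that c'(1) by blast
qed

lemma infinite_two_circles: "infinite two_circles"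
proof
  assume "finite two_circles"
  then have "finite (sphere (0::complex) 1)" by (simp add: two_circles_def)
  moreover have "connected (sphere (0::complex) 1)" by (rule connected_sphere) simp
  ultimately have "sphere (0::complex) 1 = {} \<or> (\<exists>a. sphere (0::complex) 1 = {a})"
    by (simp add: connected_finite_iff_sing)
  moreover have one: "1 \<in> sphere (0::complex) 1" by simp
  ultimately obtain a where "sphere (0::complex) 1 = {a}" by blast
  moreover have "-1 \<in> sphere (0::complex) 1" by simp
  ultimately show False using one by simp
qed

lemma not_connected_two_circles: "\<not> connected two_circles"
proof
  assume "connected two_circles"
  moreover have "1 \<in> two_circles" "4 \<in> two_circles" by (auto simp: mem_two_circles)
  moreover have "cmod (1 - 0 :: complex) = 1" by simp
  ultimately have "cmod (4 - 0 :: complex) = 1"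
    using connected_subset_two_circles[of two_circles 1 4 0] by blast
  then show False by simp
qed

section \<open>Minimal self-maps of two circles are injective\<close>

text \<open>With c a maximum point and a the last point before c where F \<le> F x, every value taken on
  the open interval from a to c is taken again between c and y.\<close>
lemma continuous_on_fold_at_max:
  fixes F :: "real \<Rightarrow> real"
  assumes cF: "continuous_on {x..y} F" and "F x = F y" "m \<in> {x..y}" "F x < F m"
  obtains a b where "x \<le> a" "a < b" "b \<le> y" "F ` {a<..<b} \<subseteq> F ` ({x..y} - {a<..<b})"
proof -
  obtain c where c: "c \<in> {x..y}" "\<And>t. t \<in> {x..y} \<Longrightarrow> F t \<le> F c"
    using continuous_attains_sup[OF compact_Icc _ cF] assms(3) by auto
  have "F x < F c" using c(2)[OF assms(3)] assms(4) by simp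
  have "closed {t \<in> {x..c}. F t \<le> F x}"
    using continuous_on_subset[OF cF] c(1) by (intro continuous_on_closed_Collect_le) auto
  moreover have "bounded {t \<in> {x..c}. F t \<le> F x}"
    by (rule bounded_subset[OF bounded_closed_interval]) auto
  ultimately have "compact {t \<in> {x..c}. F t \<le> F x}" by (simp add: compact_eq_bounded_closed)
  then obtain a where a: "a \<in> {x..c}" "F a \<le> F x"
    and a_max: "\<And>t. t \<in> {x..c} \<Longrightarrow> F t \<le> F x \<Longrightarrow> t \<le> a"
    using compact_attains_sup[of "{t \<in> {x..c}. F t \<le> F x}"] c(1) by force
  have "a < c" using a \<open>F x < F c\<close> by (cases "a = c") auto
  have hit: "\<exists>t'\<in>{c..y}. F t' = F t" if t: "t \<in> {a<..<c}" for t
  proof -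
    have "F x < F t" using a_max[of t] t a(1) by force
    moreover have "F t \<le> F c" using c t a(1) by auto
    ultimately show ?thesis
      using IVT2'[of F y "F t" c] continuous_on_subset[OF cF] c(1) \<open>F x = F y\<close> by force
  qed
  have "F ` {a<..<c} \<subseteq> F ` ({x..y} - {a<..<c})"
  proof (rule image_subsetI)
    fix t assume "t \<in> {a<..<c}"
    then obtain t' where "t' \<in> {c..y}" "F t' = F t" using hit by blast
    then show "F t \<in> F ` ({x..y} - {a<..<c})" using c(1) by (intro image_eqI[of _ F t']) auto
  qed
  then show ?thesis using that a(1) \<open>a < c\<close> c(1) by auto
qed

lemma continuous_on_fold:
  fixes F :: "real \<Rightarrow> real"
  assumes cF: "continuous_on {x..y} F" and "x < y" "F x = F y"
  obtains a b where "x \<le> a" "a < b" "b \<le> y" "F ` {a<..<b} \<subseteq> F ` ({x..y} - {a<..<b})"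
proof -
  consider "\<forall>t\<in>{x..y}. F t = F x" | m where "m \<in> {x..y}" "F x < F m" | m where "m \<in> {x..y}" "F m < F x"
  proof (cases "\<forall>t\<in>{x..y}. F t = F x")
    case False
    then obtain m where m: "m \<in> {x..y}" "F m \<noteq> F x" by blast
    show thesis
    proof (cases "F x < F m")
      case True
      then show thesis using that(2) m(1) by blast
    next
      case False
      then show thesis using that(3)[OF m(1)] m(2) by simp
    qed
  qed (use that(1) in blast)
  then show ?thesis
  proof cases
    case 1
    have incl: "F ` {x<..<y} \<subseteq> F ` ({x..y} - {x<..<y})"
    proof (rule image_subsetI)
      fix t assume t: "t \<in> {x<..<y}"
      have "t \<in> {x..y}" using t by simp
      then have "F t = F y" using 1 \<open>F x = F y\<close> by metis
      moreover have "y \<in> {x..y} - {x<..<y}" using \<open>x < y\<close> by simp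
      ultimately show "F t \<in> F ` ({x..y} - {x<..<y})" by (rule image_eqI)
    qed
    show ?thesis by (rule that[of x y]) (use \<open>x < y\<close> incl in auto)
  next
    case 2
    show ?thesis by (rule continuous_on_fold_at_max[OF cF \<open>F x = F y\<close> 2]) (rule that)
  next
    case 3
    have "continuous_on {x..y} (\<lambda>t. - F t)" using cF by (intro continuous_intros)
    moreover have "- F x = - F y" "- F x < - F m" using 3 \<open>F x = F y\<close> by auto
    ultimately obtain a b where ab: "x \<le> a" "a < b" "b \<le> y"
      and fold: "(\<lambda>t. - F t) ` {a<..<b} \<subseteq> (\<lambda>t. - F t) ` ({x..y} - {a<..<b})"
      using continuous_on_fold_at_max[of x y "\<lambda>t. - F t" m] 3(1) by blast
    have "F ` {a<..<b} \<subseteq> F ` ({x..y} - {a<..<b})"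
    proof (rule image_subsetI)
      fix t assume "t \<in> {a<..<b}"
      then obtain t' where "t' \<in> {x..y} - {a<..<b}" "- F t = - F t'" using fold by blast
      then show "F t \<in> F ` ({x..y} - {a<..<b})" by (intro image_eqI[of _ F t']) auto
    qed
    then show ?thesis using ab that by blast
  qed
qed

lemma continuous_inj_on_image_contains_ball:
  fixes F :: "real \<Rightarrow> real"
  assumes "continuous_on {a..b} F" "inj_on F {a..b}" "s \<in> {a<..<b}"
  obtains \<eta> where "\<eta> > 0" "ball (F s) \<eta> \<subseteq> F ` {a..b}"
proof -
  have "{a<..<b} \<subseteq> {a..b}" by auto
  then have "open (F ` {a<..<b})"
    using injective_eq_1d_open_map_UNIV[of "{a..b}" F] assms(1,2) by simp
  then obtain \<eta> where "\<eta> > 0" "ball (F s) \<eta> \<subseteq> F ` {a<..<b}"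
    using assms(3) by (meson imageI open_contains_ball)
  then show ?thesis using that by (meson greaterThanLessThan_subseteq_atLeastAtMost_iff image_mono order.refl order_trans)
qed

lemma minimal_map_two_circles_no_fold:
  assumes min: "minimal_map two_circles f" and c: "c \<in> {0,3}" and "a < b"
    and W: "W \<subseteq> two_circles"
    and disj: "\<And>t. t \<in> {a<..<b} \<Longrightarrow> circle_point c t \<notin> W"
    and fold: "\<And>t. t \<in> {a<..<b} \<Longrightarrow> f (circle_point c t) \<in> f ` W"
  shows False
proof -
  define t0 where "t0 = (a + b) / 2"
  obtain r where "r > 0" and param: "\<And>z. z \<in> two_circles \<Longrightarrow> dist z (circle_point c t0) < r \<Longrightarrow>
      \<exists>t. z = circle_point c t \<and> \<bar>t - t0\<bar> < (b - a) / 2"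
    using circle_point_local_param[OF c, of "(b - a) / 2"] \<open>a < b\<close> by auto
  have near: "\<exists>t\<in>{a<..<b}. z = circle_point c t"
    if z: "z \<in> ball (circle_point c t0) r \<inter> two_circles" for z
  proof -
    obtain t where "z = circle_point c t" "\<bar>t - t0\<bar> < (b - a) / 2"
      using param[of z] z by (auto simp: dist_commute)
    moreover from this(2) have "t \<in> {a<..<b}" by (auto simp: t0_def abs_less_iff field_simps)
    ultimately show ?thesis by blast
  qed
  show False
  proof (rule minimal_map_no_fold[OF min compact_two_circles _ _ W])
    show "open (ball (circle_point c t0) r)" by simp
    have "circle_point c t0 \<in> ball (circle_point c t0) r \<inter> two_circles"
      using \<open>r > 0\<close> circle_point_in_two_circles[OF c] by simp
    then show "ball (circle_point c t0) r \<inter> two_circles \<noteq> {}" by blast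
    show "ball (circle_point c t0) r \<inter> W = {}" using near disj W by blast
    show "f ` (ball (circle_point c t0) r \<inter> two_circles) \<subseteq> f ` W" using near fold by blast
  qed
qed

lemma minimal_map_two_circles_lift_inj:
  assumes min: "minimal_map two_circles f" and c: "c \<in> {0,3}" and "b - a < 2 * pi"
    and cF: "continuous_on {a..b} F"
    and lift: "\<And>t. t \<in> {a..b} \<Longrightarrow> f (circle_point c t) = circle_point c' (F t)"
  shows "inj_on F {a..b}"
proof -
  have no_collision: False if xy: "x \<in> {a..b}" "y \<in> {a..b}" "x < y" "F x = F y" for x y
  proof -
    have sub: "{x..y} \<subseteq> {a..b}" using xy by auto
    then have "continuous_on {x..y} F" by (rule continuous_on_subset[OF cF])
    then obtain a' b' where ab': "x \<le> a'" "a' < b'" "b' \<le> y"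
      and fold: "F ` {a'<..<b'} \<subseteq> F ` ({x..y} - {a'<..<b'})"
      using continuous_on_fold xy(3,4) by blast
    show False
    proof (rule minimal_map_two_circles_no_fold[OF min c \<open>a' < b'\<close>])
      show "circle_point c ` ({x..y} - {a'<..<b'}) \<subseteq> two_circles"
        using circle_point_in_two_circles[OF c] by auto
      fix t assume t: "t \<in> {a'<..<b'}"
      then have ta: "t \<in> {a..b}" using ab' sub by auto
      show "circle_point c t \<notin> circle_point c ` ({x..y} - {a'<..<b'})"
      proof
        assume "circle_point c t \<in> circle_point c ` ({x..y} - {a'<..<b'})"
        then obtain t' where t': "t' \<in> {x..y} - {a'<..<b'}" "circle_point c t = circle_point c t'" by blast
        have "\<bar>t - t'\<bar> < 2 * pi" using ta t' sub \<open>b - a < 2 * pi\<close> by (auto simp: abs_less_iff)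
        then show False using circle_point_inj[OF t'(2)] t t' by auto
      qed
      from fold t have "F t \<in> F ` ({x..y} - {a'<..<b'})" by blast
      then obtain t' where t': "F t = F t'" "t' \<in> {x..y} - {a'<..<b'}" by (rule imageE)
      then have "t' \<in> {a..b}" using sub by blast
      then have "f (circle_point c t) = f (circle_point c t')" using lift[OF ta] lift t'(1) by simp
      then show "f (circle_point c t) \<in> f ` circle_point c ` ({x..y} - {a'<..<b'})" using t'(2) by blast
    qed
  qed
  show ?thesis
  proof (rule inj_onI, rule ccontr)
    fix x y assume "x \<in> {a..b}" "y \<in> {a..b}" "F x = F y" "x \<noteq> y"
    then show False using no_collision[of x y] no_collision[of y x] by (cases "x < y") auto
  qed
qed

lemma minimal_map_two_circles_local_lift:
  assumes min: "minimal_map two_circles f" and p: "p \<in> two_circles"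
    and c': "c' \<in> {0,3}" and fp: "f p = circle_point c' v" and "0 < \<delta>" "\<delta> \<le> 1"
  obtains c s F where "c \<in> {0,3}" "p = circle_point c s" "F s = v"
    "continuous_on {s-\<delta>..s+\<delta>} F" "inj_on F {s-\<delta>..s+\<delta>}"
    "\<And>t. t \<in> {s-\<delta>..s+\<delta>} \<Longrightarrow> f (circle_point c t) = circle_point c' (F t)"
proof -
  have f_in: "f ` two_circles \<subseteq> two_circles" and cf: "continuous_on two_circles f"
    using min unfolding minimal_map_def by auto
  obtain c where c: "c \<in> {0,3}" "cmod (p - c) = 1" using p mem_two_circles by blast
  obtain s where s: "p = circle_point c s" using circle_point_surj[OF c(2)] by blast
  have s_in: "s \<in> {s-\<delta>..s+\<delta>}" using \<open>0 < \<delta>\<close> by simp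
  then have "s - \<delta> \<le> s + \<delta>" by simp
  then obtain c'' F0 where c'': "c'' \<in> {0,3}" and cF0: "continuous_on {s-\<delta>..s+\<delta>} F0"
    and lift0: "\<And>t. t \<in> {s-\<delta>..s+\<delta>} \<Longrightarrow> f (circle_point c t) = circle_point c'' (F0 t)"
    using two_circles_lift[OF cf f_in c(1)] by blast
  have eq: "circle_point c'' (F0 s) = circle_point c' v" using lift0[OF s_in] s fp by simp
  then have "dist (circle_point c'' (F0 s)) (circle_point c' v) < 1" by simp
  then have "c'' = c'"
    by (rule two_circles_centre_unique[OF c'' c' norm_circle_point_minus norm_circle_point_minus])
  with eq have "circle_point c' v = circle_point c' (F0 s)" by simp
  then obtain n :: int where n: "v = F0 s + 2 * of_int n * pi" unfolding circle_point_eq_iff by blast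
  define F where "F t = F0 t + 2 * of_int n * pi" for t
  have lift: "f (circle_point c t) = circle_point c' (F t)" if "t \<in> {s-\<delta>..s+\<delta>}" for t
    using lift0[OF that] \<open>c'' = c'\<close> circle_point_shift by (simp add: F_def)
  have cF: "continuous_on {s-\<delta>..s+\<delta>} F" unfolding F_def by (intro continuous_intros cF0)
  have "(s + \<delta>) - (s - \<delta>) < 2 * pi" using \<open>\<delta> \<le> 1\<close> pi_gt3 by simp
  then have "inj_on F {s-\<delta>..s+\<delta>}" by (rule minimal_map_two_circles_lift_inj[OF min c(1) _ cF lift])
  moreover have "F s = v" using n by (simp add: F_def)
  ultimately show ?thesis using that c(1) s cF lift by blast
qed

lemma circle_points_far_apart:
  assumes "3 * \<delta> \<le> dist (circle_point c s) (circle_point c' s')" "\<bar>t - s\<bar> < \<delta>" "\<bar>t' - s'\<bar> \<le> \<delta>"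
  shows "circle_point c t \<noteq> circle_point c' t'"
proof
  assume eq: "circle_point c t = circle_point c' t'"
  have "dist (circle_point c s) (circle_point c' s')
      \<le> dist (circle_point c s) (circle_point c t) + dist (circle_point c' t') (circle_point c' s')"
    using dist_triangle[of "circle_point c s" "circle_point c' s'" "circle_point c t"] eq by simp
  also have "\<dots> \<le> \<bar>s - t\<bar> + \<bar>t' - s'\<bar>" by (intro add_mono dist_circle_point)
  finally show False using assms by linarith
qed

text \<open>If f p = f q with p \<noteq> q, lifts of f near p and near q with the same value at the base
  points exist, and the one near q is an open map. So f maps a small arc around p into the image
  of an arc around q that stays away from p.\<close>
lemma minimal_map_two_circles_inj:
  assumes min: "minimal_map two_circles f"
  shows "inj_on f two_circles"
proof (rule inj_onI, rule ccontr)
  fix p q assume p: "p \<in> two_circles" and q: "q \<in> two_circles" and "f p = f q" "p \<noteq> q"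
  define \<delta> where "\<delta> = min 1 (dist p q / 3)"
  have \<delta>: "0 < \<delta>" "\<delta> \<le> 1" "3 * \<delta> \<le> dist p q" using \<open>p \<noteq> q\<close> by (auto simp: \<delta>_def)
  have "f p \<in> two_circles" using min p unfolding minimal_map_def by blast
  then obtain c' v where c': "c' \<in> {0,3}" and fp: "f p = circle_point c' v"
    unfolding mem_two_circles by (metis circle_point_surj)
  obtain cp sp Fp where cp: "cp \<in> {0,3}" "p = circle_point cp sp" "Fp sp = v"
    and cFp: "continuous_on {sp-\<delta>..sp+\<delta>} Fp" and "inj_on Fp {sp-\<delta>..sp+\<delta>}"
    and lift_p: "\<And>t. t \<in> {sp-\<delta>..sp+\<delta>} \<Longrightarrow> f (circle_point cp t) = circle_point c' (Fp t)"
    using minimal_map_two_circles_local_lift[OF min p c' fp \<delta>(1,2)] by blast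
  have fq: "f q = circle_point c' v" using fp \<open>f p = f q\<close> by simp
  obtain cq sq Fq where cq: "cq \<in> {0,3}" "q = circle_point cq sq" "Fq sq = v"
    and cFq: "continuous_on {sq-\<delta>..sq+\<delta>} Fq" and inj_q: "inj_on Fq {sq-\<delta>..sq+\<delta>}"
    and lift_q: "\<And>t. t \<in> {sq-\<delta>..sq+\<delta>} \<Longrightarrow> f (circle_point cq t) = circle_point c' (Fq t)"
    using minimal_map_two_circles_local_lift[OF min q c' fq \<delta>(1,2)] by blast
  have "sq \<in> {sq-\<delta><..<sq+\<delta>}" using \<delta>(1) by simp
  then obtain \<eta> where "\<eta> > 0" and \<eta>: "ball (Fq sq) \<eta> \<subseteq> Fq ` {sq-\<delta>..sq+\<delta>}"
    by (rule continuous_inj_on_image_contains_ball[OF cFq inj_q])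
  have "sp \<in> {sp-\<delta>..sp+\<delta>}" using \<delta>(1) by simp
  from cFp[unfolded continuous_on_iff, rule_format, OF this \<open>\<eta> > 0\<close>]
  obtain d where "d > 0"
    and d: "\<And>t. t \<in> {sp-\<delta>..sp+\<delta>} \<Longrightarrow> dist t sp < d \<Longrightarrow> dist (Fp t) (Fp sp) < \<eta>"
    by blast
  define \<epsilon> where "\<epsilon> = min d \<delta>"
  have near_p: "t \<in> {sp-\<delta>..sp+\<delta>} \<and> dist t sp < d \<and> \<bar>t - sp\<bar> < \<delta>"
    if "t \<in> {sp-\<epsilon><..<sp+\<epsilon>}" for t
    using that by (auto simp: \<epsilon>_def dist_real_def abs_less_iff)
  show False
  proof (rule minimal_map_two_circles_no_fold[OF min cp(1)])
    show "sp - \<epsilon> < sp + \<epsilon>" using \<open>d > 0\<close> \<delta>(1) unfolding \<epsilon>_def by linarith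
    show "circle_point cq ` {sq-\<delta>..sq+\<delta>} \<subseteq> two_circles"
      using circle_point_in_two_circles[OF cq(1)] by auto
    fix t assume t: "t \<in> {sp-\<epsilon><..<sp+\<epsilon>}"
    show "circle_point cp t \<notin> circle_point cq ` {sq-\<delta>..sq+\<delta>}"
    proof
      assume "circle_point cp t \<in> circle_point cq ` {sq-\<delta>..sq+\<delta>}"
      then obtain t' where t': "t' \<in> {sq-\<delta>..sq+\<delta>}" "circle_point cp t = circle_point cq t'" by blast
      moreover from t'(1) have "\<bar>t' - sq\<bar> \<le> \<delta>" by (simp add: abs_le_iff)
      ultimately show False
        using circle_points_far_apart[of \<delta> cp sp cq sq t t'] \<delta>(3) cp(2) cq(2) near_p[OF t] by simp
    qed
    have "Fp t \<in> ball (Fq sq) \<eta>" using d near_p[OF t] cp(3) cq(3) by (simp add: dist_commute)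
    then obtain t' where t': "t' \<in> {sq-\<delta>..sq+\<delta>}" "Fp t = Fq t'" using \<eta> by blast
    then have "f (circle_point cp t) = f (circle_point cq t')" using lift_p near_p[OF t] lift_q by simp
    then show "f (circle_point cp t) \<in> f ` circle_point cq ` {sq-\<delta>..sq+\<delta>}" using t'(1) by blast
  qed
qed

lemma minimal_map_two_circles_bij:
  assumes "minimal_map two_circles f"
  shows "bij_betw f two_circles two_circles"
  unfolding bij_betw_def
  using minimal_map_two_circles_inj[OF assms] minimal_map_imp_surj[OF assms compact_two_circles] ..

section \<open>A minimal homeomorphism of two circles\<close>

lemma irrational_rotation_dense:
  assumes \<theta>: "\<theta> \<notin> \<rat>" and u: "cmod u = 1" and v: "cmod v = 1" and "\<epsilon> > 0"
  obtains m where "cmod (u * exp (\<i> * of_real (2 * pi * \<theta>)) ^ m - v) < \<epsilon>"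
proof -
  obtain \<beta> where \<beta>: "v / u = circle_point 0 \<beta>"
    using circle_point_surj[of "v / u" 0] u v by (auto simp: norm_divide)
  have "\<epsilon> / (2 * pi) > 0" using \<open>\<epsilon> > 0\<close> by simp
  then obtain h k :: int where "k > 0" and hk: "\<bar>of_int k * \<theta> - of_int h - \<beta> / (2 * pi)\<bar> < \<epsilon> / (2 * pi)"
    by (rule sequence_of_fractional_parts_is_dense[OF \<theta>])
  have "exp (\<i> * of_real (2 * pi * \<theta>)) ^ nat k = exp (of_nat (nat k) * (\<i> * of_real (2 * pi * \<theta>)))"
    by (rule exp_of_nat_mult[symmetric])
  also have "of_nat (nat k) * (\<i> * of_real (2 * pi * \<theta>)) = \<i> * of_real (2 * pi * of_int k * \<theta>)"
    using \<open>k > 0\<close> by simp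
  finally have pow: "exp (\<i> * of_real (2 * pi * \<theta>)) ^ nat k = circle_point 0 (2 * pi * of_int k * \<theta>)"
    by (simp add: circle_point_def)
  have "u \<noteq> 0" using u by auto
  then have "v = u * circle_point 0 \<beta>" using \<beta> by (simp add: divide_eq_eq mult.commute)
  then have "u * exp (\<i> * of_real (2 * pi * \<theta>)) ^ nat k - v
      = u * (circle_point 0 (2 * pi * of_int k * \<theta>) - circle_point 0 (\<beta> + 2 * of_int h * pi))"
    by (simp only: pow circle_point_shift right_diff_distrib)
  then have "cmod (u * exp (\<i> * of_real (2 * pi * \<theta>)) ^ nat k - v)
      = dist (circle_point 0 (2 * pi * of_int k * \<theta>)) (circle_point 0 (\<beta> + 2 * of_int h * pi))"
    using u by (simp add: dist_norm norm_mult)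
  also have "\<dots> \<le> \<bar>2 * pi * of_int k * \<theta> - (\<beta> + 2 * of_int h * pi)\<bar>" by (rule dist_circle_point)
  also have "2 * pi * of_int k * \<theta> - (\<beta> + 2 * of_int h * pi) = 2 * pi * (of_int k * \<theta> - of_int h - \<beta> / (2 * pi))"
    by (simp add: field_simps)
  also have "\<bar>\<dots>\<bar> = 2 * pi * \<bar>of_int k * \<theta> - of_int h - \<beta> / (2 * pi)\<bar>"
    by (simp add: abs_mult)
  also have "\<dots> < \<epsilon>" using hk by (simp add: less_divide_eq mult.commute)
  finally show ?thesis by (rule that)
qed

text \<open>The angle is \<pi> \<theta>, so that the square of rot_swap \<theta> rotates each circle by 2 \<pi> \<theta>.\<close>
definition rot_swap :: "real \<Rightarrow> complex \<Rightarrow> complex" where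
  "rot_swap \<theta> z = (if cmod z = 1 then z * exp (\<i> * of_real (pi * \<theta>)) + 3
                    else (z - 3) * exp (\<i> * of_real (pi * \<theta>)))"

lemma rot_swap_step:
  assumes "c \<in> {0,3}" "cmod u = 1"
  shows "rot_swap \<theta> (c + u) = (3 - c) + u * exp (\<i> * of_real (pi * \<theta>))"
proof (cases "c = 0")
  case False
  then have "c = 3" using assms(1) by simp
  moreover have "cmod (3 + u) \<noteq> 1" using sphere_3_not_unit[of "3 + u"] assms(2) by simp
  ultimately show ?thesis by (simp add: rot_swap_def)
qed (use assms(2) in \<open>simp add: rot_swap_def\<close>)

lemma rot_swap_iter:
  assumes "c \<in> {0,3}" "cmod u = 1"
  shows "(rot_swap \<theta> ^^ n) (c + u) = (if even n then c else 3 - c) + u * exp (\<i> * of_real (pi * \<theta>)) ^ n"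
proof (induction n)
  case (Suc n)
  have "(if even n then c else 3 - c) \<in> {0,3}" "cmod (u * exp (\<i> * of_real (pi * \<theta>)) ^ n) = 1"
    using assms by (auto simp: norm_mult norm_power)
  have "(rot_swap \<theta> ^^ Suc n) (c + u)
      = rot_swap \<theta> ((if even n then c else 3 - c) + u * exp (\<i> * of_real (pi * \<theta>)) ^ n)"
    using Suc by simp
  also have "\<dots> = (3 - (if even n then c else 3 - c)) + u * exp (\<i> * of_real (pi * \<theta>)) ^ n * exp (\<i> * of_real (pi * \<theta>))"
    by (rule rot_swap_step) fact+
  also have "\<dots> = (if even (Suc n) then c else 3 - c) + u * exp (\<i> * of_real (pi * \<theta>)) ^ Suc n"
    by (simp add: mult.assoc mult.commute)
  finally show ?case .
qed simp

lemma rot_swap_in_two_circles: "z \<in> two_circles \<Longrightarrow> rot_swap \<theta> z \<in> two_circles"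
  by (elim two_circles_cases) (auto simp: rot_swap_step mem_two_circles norm_mult)

lemma rot_swap_inverse: "z \<in> two_circles \<Longrightarrow> rot_swap (- \<theta>) (rot_swap \<theta> z) = z"
proof (elim two_circles_cases)
  fix c u assume cu: "c \<in> {0,3}" "cmod u = 1" "z = c + u"
  then have "3 - c \<in> {0,3}" "cmod (u * exp (\<i> * of_real (pi * \<theta>))) = 1" by (auto simp: norm_mult)
  from rot_swap_step[OF this, of "- \<theta>"] show "rot_swap (- \<theta>) (rot_swap \<theta> z) = z"
    using cu rot_swap_step[OF cu(1,2)] by (simp add: mult.assoc flip: exp_add)
qed

lemma continuous_on_rot_swap: "continuous_on two_circles (rot_swap \<theta>)"
  unfolding two_circles_def rot_swap_def
  by (rule continuous_on_cases)
    (auto intro!: continuous_intros dest: sphere_3_not_unit simp: dist_norm norm_minus_commute)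

lemma homeomorphism_rot_swap: "homeomorphism two_circles two_circles (rot_swap \<theta>) (rot_swap (- \<theta>))"
  using rot_swap_inverse[of _ \<theta>] rot_swap_inverse[of _ "- \<theta>"]
  by (intro homeomorphismI continuous_on_rot_swap) (auto intro: rot_swap_in_two_circles)

lemma minimal_map_rot_swap:
  assumes "\<theta> \<notin> \<rat>"
  shows "minimal_map two_circles (rot_swap \<theta>)"
  unfolding minimal_map_def
proof (intro conjI ballI subsetI continuous_on_rot_swap)
  show "z \<in> two_circles" if "z \<in> rot_swap \<theta> ` two_circles" for z
    using that rot_swap_in_two_circles by blast
  fix z w assume "z \<in> two_circles" "w \<in> two_circles"
  then obtain c u d v where cu: "c \<in> {0,3}" "cmod u = 1" "z = c + u"
    and dv: "d \<in> {0,3}" "cmod v = 1" "w = d + v" by (metis two_circles_cases)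
  define \<omega> where "\<omega> = exp (\<i> * of_real (pi * \<theta>))"
  have \<omega>2: "\<omega> ^ 2 = exp (\<i> * of_real (2 * pi * \<theta>))"
    by (simp add: \<omega>_def power2_eq_square mult_ac flip: exp_add)
  obtain j where j: "j \<in> {0, 1::nat}" "d = (if even j then c else 3 - c)"
    using cu(1) dv(1) by (cases "d = c") (auto intro: that[of 0] that[of 1])
  have "cmod (u * \<omega> ^ j) = 1" using cu(2) by (simp add: \<omega>_def norm_mult norm_power)
  show "w \<in> closure {(rot_swap \<theta> ^^ n) z | n. True}"
    unfolding closure_approachable
  proof (intro allI impI)
    fix \<epsilon> :: real assume "\<epsilon> > 0"
    then obtain m where m: "cmod (u * \<omega> ^ j * exp (\<i> * of_real (2 * pi * \<theta>)) ^ m - v) < \<epsilon>"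
      using irrational_rotation_dense[OF assms \<open>cmod (u * \<omega> ^ j) = 1\<close> dv(2)] by blast
    have "(rot_swap \<theta> ^^ (j + 2 * m)) z = d + u * \<omega> ^ (j + 2 * m)"
      using rot_swap_iter[OF cu(1,2)] cu(3) j unfolding \<omega>_def by simp
    also have "u * \<omega> ^ (j + 2 * m) = u * \<omega> ^ j * exp (\<i> * of_real (2 * pi * \<theta>)) ^ m"
      by (simp only: power_add power_mult \<omega>2 mult.assoc)
    finally have "(rot_swap \<theta> ^^ (j + 2 * m)) z = d + u * \<omega> ^ j * exp (\<i> * of_real (2 * pi * \<theta>)) ^ m" .
    then have "dist ((rot_swap \<theta> ^^ (j + 2 * m)) z) w < \<epsilon>" using m dv(3) by (simp add: dist_norm)
    then show "\<exists>y\<in>{(rot_swap \<theta> ^^ n) z | n. True}. dist y w < \<epsilon>" by blast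
  qed
qed

section \<open>Spaces homeomorphic to two circles\<close>

lemma homeomorphism_conj:
  assumes "homeomorphism X Y \<phi> \<psi>" "homeomorphism Y Y T S"
  shows "homeomorphism X X (\<psi> \<circ> T \<circ> \<phi>) (\<psi> \<circ> S \<circ> \<phi>)"
  using homeomorphism_compose[OF homeomorphism_compose[OF assms(1,2)] homeomorphism_symD[OF assms(1)]]
  by (simp add: comp_assoc)

lemma homeomorphic_two_circles_infinite:
  assumes "homeomorphism two_circles X \<phi> \<psi>"
  shows "infinite X"
  using infinite_two_circles finite_imageI[of X \<psi>] assms unfolding homeomorphism_def by auto

lemma homeomorphic_two_circles_minimal_homeomorphism:
  assumes hom: "homeomorphism two_circles X \<phi> \<psi>"
  obtains T S where "homeomorphism X X T S" "minimal_map X T"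
proof -
  obtain \<theta> :: real where "\<theta> \<notin> \<rat>"
    using uncountable_UNIV_real countable_rat by (metis UNIV_eq_I countable_subset subset_UNIV)
  then show ?thesis
    using that homeomorphism_conj[OF homeomorphism_symD[OF hom] homeomorphism_rot_swap]
      minimal_map_conj[OF hom compact_two_circles minimal_map_rot_swap] by blast
qed

lemma homeomorphic_two_circles_minimal_map_bij:
  fixes X :: "'a::t2_space set"
  assumes hom: "homeomorphism two_circles X \<phi> \<psi>" and min: "minimal_map X T"
  shows "bij_betw T X X"
proof (rule bij_betw_of_conj[OF homeomorphism_symD[OF hom]])
  show "T ` X \<subseteq> X" using min unfolding minimal_map_def by blast
  have "compact X" using hom compact_two_circles homeomorphic_compactness homeomorphic_def by blast
  then show "bij_betw (\<psi> \<circ> T \<circ> \<phi>) two_circles two_circles"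
    by (intro minimal_map_two_circles_bij minimal_map_conj[OF homeomorphism_symD[OF hom] _ min])
qed

text \<open>rot_swap 0 is the plain swap of the two circles.\<close>
lemma homeomorphic_two_circles_not_slovak_space:
  fixes X :: "'a::t1_space set"
  assumes hom: "homeomorphism two_circles X \<phi> \<psi>"
  shows "\<not> slovak_space X"
proof (rule not_slovak_space_if_involution)
  show "infinite X" by (rule homeomorphic_two_circles_infinite[OF hom])
  show "homeomorphism X X (\<phi> \<circ> rot_swap 0 \<circ> \<psi>) (\<phi> \<circ> rot_swap 0 \<circ> \<psi>)"
    using homeomorphism_conj[OF homeomorphism_symD[OF hom] homeomorphism_rot_swap[of 0]] by simp
  have one: "1 \<in> two_circles" and four: "4 \<in> two_circles" by (auto simp: mem_two_circles)
  then show "\<phi> 1 \<in> X" using hom unfolding homeomorphism_def by blast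
  have \<psi>1: "\<psi> (\<phi> 1) = 1" and \<psi>4: "\<psi> (\<phi> 4) = 4" using hom one four unfolding homeomorphism_def by auto
  show "(\<phi> \<circ> rot_swap 0 \<circ> \<psi>) (\<phi> 1) \<noteq> \<phi> 1"
  proof
    assume "(\<phi> \<circ> rot_swap 0 \<circ> \<psi>) (\<phi> 1) = \<phi> 1"
    then have "\<phi> 4 = \<phi> 1" using \<psi>1 by (simp add: rot_swap_def)
    then have "\<psi> (\<phi> 4) = \<psi> (\<phi> 1)" by simp
    then show False using \<psi>1 \<psi>4 by simp
  qed
qed

section \<open>The example in the sequence space\<close>

definition seq_of_complex :: "complex \<Rightarrow> nat \<Rightarrow> real" where
  "seq_of_complex z n = (if n = 0 then Re z else if n = 1 then Im z else 0)"

definition complex_of_seq :: "(nat \<Rightarrow> real) \<Rightarrow> complex" where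
  "complex_of_seq x = Complex (x 0) (x 1)"

lemma complex_of_seq_of_complex [simp]: "complex_of_seq (seq_of_complex z) = z"
  by (simp add: complex_of_seq_def seq_of_complex_def)

lemma homeomorphism_seq_of_complex:
  "homeomorphism S (seq_of_complex ` S) seq_of_complex complex_of_seq"
proof (rule homeomorphismI)
  show "continuous_on S seq_of_complex"
    unfolding seq_of_complex_def
  proof (rule continuous_on_coordinatewise_then_product)
    fix i :: nat
    show "continuous_on S (\<lambda>z. if i = 0 then Re z else if i = 1 then Im z else 0)"
      by (cases "i = 0"; cases "i = 1") (auto intro: continuous_intros)
  qed
  have eq: "complex_of_seq = (\<lambda>x. of_real (x 0) + \<i> * of_real (x 1))"
    by (auto simp: complex_of_seq_def fun_eq_iff complex_eq_iff)
  have "continuous_on (seq_of_complex ` S) (\<lambda>x::nat \<Rightarrow> real. of_real (x 0) + \<i> * of_real (x 1))"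
    by (intro continuous_intros continuous_on_subset[OF continuous_on_product_coordinates] subset_UNIV)
  then show "continuous_on (seq_of_complex ` S) complex_of_seq" by (subst eq)
qed auto

theorem theorem3p3:
  shows "\<exists>X :: (nat \<Rightarrow> real) set. compact X \<and> infinite X \<and>
    (\<exists>T S. homeomorphism X X T S \<and> minimal_map X T) \<and>
    \<not> (\<exists>T. minimal_map X T \<and> \<not> bij_betw T X X) \<and>
    \<not> (X homeomorphic sphere (0::complex) 1) \<and>
    \<not> slovak_space X"
proof -
  define X where "X = seq_of_complex ` two_circles"
  have hom: "homeomorphism two_circles X seq_of_complex complex_of_seq"
    unfolding X_def by (rule homeomorphism_seq_of_complex)
  then have "two_circles homeomorphic X" unfolding homeomorphic_def by blast
  then have "compact X" and "\<not> connected X"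
    using compact_two_circles not_connected_two_circles homeomorphic_compactness
      homeomorphic_connectedness by blast+
  moreover have "infinite X" by (rule homeomorphic_two_circles_infinite[OF hom])
  moreover obtain T S where "homeomorphism X X T S" "minimal_map X T"
    by (rule homeomorphic_two_circles_minimal_homeomorphism[OF hom])
  moreover have "connected (sphere (0::complex) 1)" by (rule connected_sphere) simp
  ultimately show ?thesis
    using homeomorphic_two_circles_minimal_map_bij[OF hom] homeomorphic_two_circles_not_slovak_space[OF hom]
      homeomorphic_connectedness by blast
qed

end
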